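(* Let $X$, $Z$ be topological vector spaces and $C\subseteq Z$ a nonempty closed convex cone with $C^-\neq\{0\}$. Assume that there exist a bounded set $B\subseteq Z$ and a neighborhood $V$ of $0$ in $Z$ with $V\subseteq B-C$. If $f:X\to\mathcal{F}(Z,C)$ is lower continuous at $x_0\in{\rm dom\,} f$, then $f$ is efficient at $x_0$.
   Context: $\mathcal{F}(Z,C)=\{A\subseteq Z\colon A=\operatorname{cl}(A+C)\}$ (empty set included); $C^-=\{z^*\in Z^*\colon z^*(z)\le0\ \forall z\in C\}$; ${\rm dom\,} f=\{x\colon f(x)\neq\emptyset\}$. A set is bounded if it is absorbed by every neighborhood of $0$. $f$ is lower continuous at $x_0$ iff for every $z_0\in f(x_0)$ and every neighborhood $V$ of $z_0$ there is a neighborhood $U$ of $x_0$ with $f(x)\cap V\neq\emptyset$ for all $x\in U$. $f$ is efficient at $x_0$ iff there exist a neighborhood $U$ of $x_0$ and a bounded set $B'\subseteq Z$ with $f(x)\cap B'\neq\emptyset$ for all $x\in U$. *)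

theory Defs
  imports "HOL-Analysis.Analysis"
begin

text \<open>Real topological vector spaces: addition and scalar multiplication are
  jointly continuous (product topology, stated via basic open sets;
  no separation axiom assumed).\<close>
class topological_real_vector = real_vector + topological_space +
  assumes continuous_add_tvs: "\<And>x y W. open W \<Longrightarrow> x + y \<in> W \<Longrightarrow>
      \<exists>U1 U2. open U1 \<and> open U2 \<and> x \<in> U1 \<and> y \<in> U2 \<and> (\<forall>a\<in>U1. \<forall>b\<in>U2. a + b \<in> W)"
  assumes continuous_scaleR_tvs: "\<And>t x W. open W \<Longrightarrow> t *\<^sub>R x \<in> W \<Longrightarrow>
      \<exists>d>0. \<exists>U. open U \<and> x \<in> U \<and> (\<forall>s. \<bar>s - t\<bar> < d \<longrightarrow> (\<forall>b\<in>U. s *\<^sub>R b \<in> W))"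

definition nbhd :: "'a::topological_space set \<Rightarrow> 'a \<Rightarrow> bool" where
  "nbhd V x \<longleftrightarrow> (\<exists>W. open W \<and> x \<in> W \<and> W \<subseteq> V)"

definition absorbs :: "'a::real_vector set \<Rightarrow> 'a set \<Rightarrow> bool" where
  "absorbs U B \<longleftrightarrow> (\<exists>r>0. \<forall>t::real. \<bar>t\<bar> \<ge> r \<longrightarrow> B \<subseteq> (\<lambda>z. t *\<^sub>R z) ` U)"

definition tvs_bounded :: "'a::topological_real_vector set \<Rightarrow> bool" where
  "tvs_bounded B \<longleftrightarrow> (\<forall>U. nbhd U 0 \<longrightarrow> absorbs U B)"

definition set_plus_tvs :: "'a::real_vector set \<Rightarrow> 'a set \<Rightarrow> 'a set" where
  "set_plus_tvs A C = {a + c | a c. a \<in> A \<and> c \<in> C}"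

definition set_minus_tvs :: "'a::real_vector set \<Rightarrow> 'a set \<Rightarrow> 'a set" where
  "set_minus_tvs A C = {a - c | a c. a \<in> A \<and> c \<in> C}"

definition FZC :: "'a::topological_real_vector set \<Rightarrow> 'a set set" where
  "FZC C = {A. A = closure (set_plus_tvs A C)}"

definition topo_dual :: "('a::topological_real_vector \<Rightarrow> real) set" where
  "topo_dual = {g. linear g \<and> continuous_on UNIV g}"

definition neg_polar :: "'a::topological_real_vector set \<Rightarrow> ('a \<Rightarrow> real) set" where
  "neg_polar C = {g \<in> topo_dual. \<forall>z\<in>C. g z \<le> 0}"

definition dom_sv :: "('x \<Rightarrow> 'z set) \<Rightarrow> 'x set" where
  "dom_sv f = {x. f x \<noteq> {}}"

definition lower_continuous_at ::
  "('x::topological_space \<Rightarrow> 'z::topological_space set) \<Rightarrow> 'x \<Rightarrow> bool" where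
  "lower_continuous_at f x0 \<longleftrightarrow>
     (\<forall>z0\<in>f x0. \<forall>V. nbhd V z0 \<longrightarrow> (\<exists>U. nbhd U x0 \<and> (\<forall>x\<in>U. f x \<inter> V \<noteq> {})))"

definition efficient_at ::
  "('x::topological_space \<Rightarrow> 'z::topological_real_vector set) \<Rightarrow> 'x \<Rightarrow> bool" where
  "efficient_at f x0 \<longleftrightarrow>
     (\<exists>U B'. nbhd U x0 \<and> tvs_bounded B' \<and> (\<forall>x\<in>U. f x \<inter> B' \<noteq> {}))"

end

theory Submission
  imports Defs
begin

text \<open>Since every value of \<open>f\<close> is closed under adding elements of \<open>C\<close>, any point of \<open>f x\<close>
  lying in the neighbourhood \<open>z\<^sub>0 + V \<subseteq> z\<^sub>0 + B - C\<close> of some \<open>z\<^sub>0 \<in> f x\<^sub>0\<close> can be pushed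
  by an element of \<open>C\<close> into \<open>z\<^sub>0 + B\<close>. Lower continuity makes \<open>f x\<close> meet \<open>z\<^sub>0 + V\<close> for all
  \<open>x\<close> near \<open>x\<^sub>0\<close>, and the translate \<open>z\<^sub>0 + B\<close> of a bounded set is bounded.\<close>

lemma nbhd_0_small_scaleR:
  fixes U :: "'z::topological_real_vector set"
  assumes "nbhd U 0"
  obtains d where "d > 0" "\<And>s. \<bar>s\<bar> < d \<Longrightarrow> s *\<^sub>R z \<in> U"
proof -
  obtain W where W: "open W" "0 \<in> W" "W \<subseteq> U" using assms unfolding nbhd_def by blast
  then obtain d V where d: "d > 0" "z \<in> V" "\<forall>s. \<bar>s - 0\<bar> < d \<longrightarrow> (\<forall>b\<in>V. s *\<^sub>R b \<in> W)"
    using continuous_scaleR_tvs[OF W(1), of 0 z] by auto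
  have "\<And>s. \<bar>s\<bar> < d \<Longrightarrow> s *\<^sub>R z \<in> U" using d W(3) by auto
  then show thesis using that d(1) by blast
qed

lemma nbhd_0_sum_subset:
  fixes U :: "'z::topological_real_vector set"
  assumes "nbhd U 0"
  obtains U1 U2 where "nbhd U1 0" "nbhd U2 0" "\<And>a b. a \<in> U1 \<Longrightarrow> b \<in> U2 \<Longrightarrow> a + b \<in> U"
proof -
  obtain W where W: "open W" "0 \<in> W" "W \<subseteq> U" using assms unfolding nbhd_def by blast
  then obtain U1 U2 where U: "open U1" "open U2" "0 \<in> U1" "0 \<in> U2" "\<forall>a\<in>U1. \<forall>b\<in>U2. a + b \<in> W"
    using continuous_add_tvs[OF W(1), of 0 0] by auto
  have "nbhd U1 0" "nbhd U2 0" using U unfolding nbhd_def by blast+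
  moreover have "\<And>a b. a \<in> U1 \<Longrightarrow> b \<in> U2 \<Longrightarrow> a + b \<in> U" using U(5) W(3) by blast
  ultimately show thesis by (rule that)
qed

lemma nbhd_translate:
  fixes V :: "'z::topological_real_vector set"
  assumes "nbhd V 0"
  shows "nbhd ((+) z ` V) z"
proof -
  obtain W where W: "open W" "0 \<in> W" "W \<subseteq> V" using assms unfolding nbhd_def by blast
  then obtain U1 U2 where U: "open U1" "z \<in> U1" "-z \<in> U2" "\<forall>a\<in>U1. \<forall>b\<in>U2. a + b \<in> W"
    using continuous_add_tvs[OF W(1), of z "-z"] by auto
  have "U1 \<subseteq> (+) z ` V"
  proof
    fix a assume "a \<in> U1"
    then have "a + - z \<in> V" using U W(3) by blast
    then show "a \<in> (+) z ` V" by (metis add.commute diff_add_cancel image_eqI uminus_add_conv_diff)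
  qed
  then show ?thesis using U unfolding nbhd_def by blast
qed

lemma tvs_bounded_translation:
  fixes B :: "'z::topological_real_vector set"
  assumes "tvs_bounded B"
  shows "tvs_bounded ((+) z ` B)"
  unfolding tvs_bounded_def
proof (intro allI impI)
  fix U :: "'z set" assume "nbhd U 0"
  then obtain U1 U2 where U: "nbhd U1 0" "nbhd U2 0" "\<And>a b. a \<in> U1 \<Longrightarrow> b \<in> U2 \<Longrightarrow> a + b \<in> U"
    by (rule nbhd_0_sum_subset) blast
  obtain r where r: "r > 0" "\<And>t. \<bar>t\<bar> \<ge> r \<Longrightarrow> B \<subseteq> (\<lambda>z. t *\<^sub>R z) ` U1"
    using assms U(1) unfolding tvs_bounded_def absorbs_def by blast
  obtain d where d: "d > 0" "\<And>s. \<bar>s\<bar> < d \<Longrightarrow> s *\<^sub>R z \<in> U2"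
    using nbhd_0_small_scaleR[OF U(2)] by blast
  show "absorbs U ((+) z ` B)" unfolding absorbs_def
  proof (intro exI[of _ "max r (2/d)"] conjI allI impI)
    show "max r (2/d) > 0" using r by simp
    fix t :: real assume t: "max r (2/d) \<le> \<bar>t\<bar>"
    then have "t \<noteq> 0" "2 \<le> \<bar>t\<bar> * d" using r d(1) by (auto simp: field_simps)
    then have "\<bar>1/t\<bar> < d" by (simp add: field_simps)
    then have small: "(1/t) *\<^sub>R z \<in> U2" by (rule d(2))
    show "(+) z ` B \<subseteq> (\<lambda>z. t *\<^sub>R z) ` U"
    proof
      fix y assume "y \<in> (+) z ` B"
      then obtain b where b: "b \<in> B" "y = z + b" by auto
      then obtain w where w: "w \<in> U1" "b = t *\<^sub>R w" using r(2) t by fastforce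
      have "w + (1/t) *\<^sub>R z \<in> U" using U(3) w(1) small .
      moreover have "y = t *\<^sub>R (w + (1/t) *\<^sub>R z)"
        using b w \<open>t \<noteq> 0\<close> by (simp add: scaleR_add_right)
      ultimately show "y \<in> (\<lambda>z. t *\<^sub>R z) ` U" by blast
    qed
  qed
qed

lemma FZC_add_mem:
  assumes "A \<in> FZC C" "a \<in> A" "c \<in> C"
  shows "a + c \<in> A"
proof -
  have "a + c \<in> set_plus_tvs A C" using assms(2,3) unfolding set_plus_tvs_def by blast
  then show ?thesis using assms(1) closure_subset unfolding FZC_def by blast
qed

theorem mainTheorem4:
  fixes f :: "'x::topological_real_vector \<Rightarrow> 'z::topological_real_vector set"
    and C B V :: "'z set" and x0 :: 'x
  assumes "convex_cone C" and "closed C"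
    and "neg_polar C \<noteq> {(\<lambda>_. 0)}"
    and "tvs_bounded B" and "nbhd V 0" and "V \<subseteq> set_minus_tvs B C"
    and "\<forall>x. f x \<in> FZC C"
    and "x0 \<in> dom_sv f"
    and "lower_continuous_at f x0"
  shows "efficient_at f x0"
proof -
  obtain z0 where z0: "z0 \<in> f x0" using assms(8) unfolding dom_sv_def by auto
  have "nbhd ((+) z0 ` V) z0" using assms(5) by (rule nbhd_translate)
  then obtain U where U: "nbhd U x0" "\<forall>x\<in>U. f x \<inter> (+) z0 ` V \<noteq> {}"
    using assms(9) z0 unfolding lower_continuous_at_def by blast
  have "f x \<inter> (+) z0 ` B \<noteq> {}" if "x \<in> U" for x
  proof -
    obtain v where v: "z0 + v \<in> f x" "v \<in> V" using U(2) \<open>x \<in> U\<close> by blast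
    then obtain b c where bc: "b \<in> B" "c \<in> C" "v = b - c"
      using assms(6) unfolding set_minus_tvs_def by blast
    have "z0 + v + c \<in> f x" using FZC_add_mem[OF _ v(1) bc(2)] assms(7) by blast
    then show ?thesis using bc by auto
  qed
  then show ?thesis
    unfolding efficient_at_def using U(1) tvs_bounded_translation[OF assms(4)] by blast
qed

end
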